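(* Let $N,n,d\ge 1$, $B>0$ and $\epsilon>0$. A dataset is $D=\{D_1,\dots,D_N\}$, where each voter $i\in\{1,\dots,N\}$ holds $D_i=\{\langle X_1^{(i)},Z_1^{(i)}\rangle,\dots,\langle X_n^{(i)},Z_n^{(i)}\rangle\}$ with $X_j^{(i)},Z_j^{(i)}\in\mathbb{R}^d$. For each voter let $$\mathcal{L}(\boldsymbol\beta,D_i)=\sum_{j=1}^n \ln\Phi\big(\boldsymbol\beta^\top (X_j^{(i)}-Z_j^{(i)})\big),\qquad \overline{\boldsymbol\beta}_i(D_i)\in\operatorname*{argmax}_{\boldsymbol\beta\in\mathbb{R}^d:\ \|\boldsymbol\beta\|_1\le B}\mathcal{L}(\boldsymbol\beta,D_i),$$ where $\Phi$ is the standard normal CDF and $\overline{\boldsymbol\beta}_i(D_i)$ is a (deterministically chosen) maximizer. Consider the randomized algorithm (Algorithm 1) that outputs $$\boldsymbol\beta^*(D)=\frac1N\sum_{i=1}^N\overline{\boldsymbol\beta}_i(D_i)+\boldsymbol R,$$ where $\boldsymbol R\in\mathbb{R}^d$ has independent coordinates, each distributed as a zero-mean Laplace random variable with scale $\frac{2B}{N\epsilon}$. Then this algorithm satisfies $\epsilon$-differential privacy both with respect to voter-neighboring datasets (VLCP) and with respect to record-neighboring datasets (RLCP).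
   Context: A randomized algorithm $Y$ satisfies $\epsilon$-differential privacy with respect to a neighboring relation if for every pair of neighboring datasets $D,D'$ and every measurable set $\mathcal{Y}$ of outputs, $\Pr[Y(D)\in\mathcal{Y}]\le e^{\epsilon}\Pr[Y(D')\in\mathcal{Y}]$. Two datasets $D=\{D_1,\dots,D_N\}$ and $D'=\{D_1',\dots,D_N'\}$ (each voter having exactly $n$ records in both) are voter-neighboring if they coincide except for the records of a single voter $i$, whose $n$ records may be changed arbitrarily; they are record-neighboring if they coincide except for a single record of a single voter. The Laplace distribution with scale $\lambda$ has density $\frac{1}{2\lambda}e^{-|x|/\lambda}$. *)

theory Defs
  imports "HOL-Probability.Probability"
begin

definition Phi :: "real \<Rightarrow> real" where
  "Phi = cdf (density lborel std_normal_density)"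

text \<open>A record is a pair (X, Z) of vectors in R^d; a voter's data is an indexed family
  of records (index type 'r, n = CARD('r)); a dataset is an indexed family of voters
  (index type 'v, N = CARD('v)).\<close>

definition l1norm :: "real ^ 'd \<Rightarrow> real" where
  "l1norm b = (\<Sum>k\<in>UNIV. \<bar>b $ k\<bar>)"

definition loglik :: "real ^ 'd \<Rightarrow> ('r::finite \<Rightarrow> (real ^ 'd) \<times> (real ^ 'd)) \<Rightarrow> real" where
  "loglik b Di = (\<Sum>j\<in>UNIV. ln (Phi (b \<bullet> (fst (Di j) - snd (Di j)))))"

definition is_argmax :: "real \<Rightarrow> ('r::finite \<Rightarrow> (real ^ 'd) \<times> (real ^ 'd)) \<Rightarrow> real ^ 'd \<Rightarrow> bool" where
  "is_argmax B Di b \<longleftrightarrow> l1norm b \<le> B \<and>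
     (\<forall>b'. l1norm b' \<le> B \<longrightarrow> loglik b' Di \<le> loglik b Di)"

definition laplace_density :: "real \<Rightarrow> real \<Rightarrow> real" where
  "laplace_density lam x = exp (- \<bar>x\<bar> / lam) / (2 * lam)"

definition laplace_vec :: "real \<Rightarrow> (real ^ 'd) measure" where
  "laplace_vec lam = density lborel (\<lambda>r. ennreal (\<Prod>k\<in>UNIV. laplace_density lam (r $ k)))"

definition algo1 :: "(('r::finite \<Rightarrow> (real ^ 'd) \<times> (real ^ 'd)) \<Rightarrow> real ^ 'd) \<Rightarrow> real \<Rightarrow> real
    \<Rightarrow> ('v::finite \<Rightarrow> 'r \<Rightarrow> (real ^ 'd) \<times> (real ^ 'd)) \<Rightarrow> (real ^ 'd) measure" where
  "algo1 sel B \<epsilon> D =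
     distr (laplace_vec (2 * B / (real CARD('v) * \<epsilon>))) borel
       (\<lambda>r. (1 / real CARD('v)) *\<^sub>R (\<Sum>i\<in>UNIV. sel (D i)) + r)"

definition diff_private :: "('a \<Rightarrow> 'b::topological_space measure) \<Rightarrow> ('a \<Rightarrow> 'a \<Rightarrow> bool) \<Rightarrow> real \<Rightarrow> bool" where
  "diff_private M nb \<epsilon> \<longleftrightarrow> (\<forall>D D'. nb D D' \<longrightarrow>
     (\<forall>Y\<in>sets borel. measure (M D) Y \<le> exp \<epsilon> * measure (M D') Y))"

definition voter_neighboring :: "('v \<Rightarrow> 'r \<Rightarrow> 'x) \<Rightarrow> ('v \<Rightarrow> 'r \<Rightarrow> 'x) \<Rightarrow> bool" where
  "voter_neighboring D D' \<longleftrightarrow> (\<exists>i. \<forall>i'. i' \<noteq> i \<longrightarrow> D i' = D' i')"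

definition record_neighboring :: "('v \<Rightarrow> 'r \<Rightarrow> 'x) \<Rightarrow> ('v \<Rightarrow> 'r \<Rightarrow> 'x) \<Rightarrow> bool" where
  "record_neighboring D D' \<longleftrightarrow> (\<exists>i j. \<forall>i' j'. (i', j') \<noteq> (i, j) \<longrightarrow> D i' j' = D' i' j')"

end

theory Submission
  imports Defs
begin

text \<open>Changing one voter's data moves the average of the per-voter maximizers, which all lie in
  the L1 ball of radius B, by at most 2B/N in L1 norm. Shifting the argument of a product of
  Laplace densities of scale \<open>\<lambda>\<close> by c changes it by at most the factor \<open>exp (\<parallel>c\<parallel>\<^sub>1 / \<lambda>)\<close>,
  so a translation-invariance argument for Lebesgue measure shows that the two output
  distributions differ by at most the factor \<open>exp \<epsilon>\<close> when \<open>\<lambda> = 2B/(N\<epsilon>)\<close>. Record-neighbouring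
  datasets are in particular voter-neighbouring.\<close>

lemma l1norm_scaleR: "l1norm (c *\<^sub>R x) = \<bar>c\<bar> * l1norm x"
  by (simp add: l1norm_def sum_distrib_left abs_mult)

lemma l1norm_minus_commute: "l1norm (x - y) = l1norm (y - x)"
  unfolding l1norm_def by (simp add: abs_minus_commute)

lemma l1norm_diff_le: "l1norm (x - y) \<le> l1norm x + l1norm y"
  unfolding l1norm_def sum.distrib[symmetric] by (rule sum_mono) auto

lemma laplace_density_shift_le:
  assumes "lam > 0"
  shows "laplace_density lam (x + t) \<le> exp (\<bar>t\<bar> / lam) * laplace_density lam x"
proof -
  have "- \<bar>x + t\<bar> / lam \<le> \<bar>t\<bar> / lam + - \<bar>x\<bar> / lam"
    using assms by (simp add: divide_simps)
  then have "exp (- \<bar>x + t\<bar> / lam) \<le> exp (\<bar>t\<bar> / lam) * exp (- \<bar>x\<bar> / lam)"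
    by (simp add: exp_add[symmetric])
  then show ?thesis
    using assms unfolding laplace_density_def by (simp add: divide_right_mono)
qed

lemma laplace_vec_density_shift_le:
  fixes s c :: "real ^ 'd"
  assumes "lam > 0"
  shows "(\<Prod>k\<in>UNIV. laplace_density lam ((s + c) $ k))
     \<le> exp (l1norm c / lam) * (\<Prod>k\<in>UNIV. laplace_density lam (s $ k))"
proof -
  have "(\<Prod>k\<in>UNIV. laplace_density lam ((s + c) $ k))
     \<le> (\<Prod>k\<in>UNIV. exp (\<bar>c $ k\<bar> / lam) * laplace_density lam (s $ k))"
    using laplace_density_shift_le[OF assms] assms
    by (intro prod_mono) (auto simp: laplace_density_def)
  also have "\<dots> = exp (l1norm c / lam) * (\<Prod>k\<in>UNIV. laplace_density lam (s $ k))"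
    by (simp add: prod.distrib l1norm_def exp_sum sum_divide_distrib)
  finally show ?thesis .
qed

lemma borel_measurable_laplace_vec_density:
  "(\<lambda>r::real ^ 'd. ennreal (\<Prod>k\<in>UNIV. laplace_density lam (r $ k))) \<in> borel_measurable borel"
  unfolding laplace_density_def by measurable

lemma emeasure_shifted_laplace_vec:
  fixes c :: "real ^ 'd"
  assumes Y: "Y \<in> sets borel"
  shows "emeasure (distr (laplace_vec lam) borel (\<lambda>r. c + r)) Y
    = (\<integral>\<^sup>+ r. ennreal (\<Prod>k\<in>UNIV. laplace_density lam (r $ k)) * indicator Y (c + r) \<partial>lborel)"
proof -
  have sets: "sets (laplace_vec lam) = sets borel"
    by (simp add: laplace_vec_def)
  have "(\<lambda>r. c + r) \<in> borel_measurable (borel :: (real ^ 'd) measure)"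
    by simp
  then have "(\<lambda>r. c + r) \<in> borel_measurable (laplace_vec lam)"
    using measurable_cong_sets[OF sets refl] by blast
  then have "emeasure (distr (laplace_vec lam) borel (\<lambda>r. c + r)) Y
      = emeasure (laplace_vec lam) ((\<lambda>r. c + r) -` Y)"
    using Y by (simp add: emeasure_distr laplace_vec_def)
  also have "\<dots> = (\<integral>\<^sup>+ r. ennreal (\<Prod>k\<in>UNIV. laplace_density lam (r $ k))
                          * indicator ((\<lambda>r. c + r) -` Y) r \<partial>lborel)"
  proof -
    have "(+) c -` Y \<inter> space borel \<in> sets borel"
      by (rule measurable_sets[OF _ Y]) simp
    then show ?thesis
      unfolding laplace_vec_def
      by (subst emeasure_density) (use borel_measurable_laplace_vec_density in auto)
  qed
  finally show ?thesis by (simp add: indicator_def)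
qed

lemma emeasure_shifted_laplace_vec_le:
  fixes a b :: "real ^ 'd"
  assumes "lam > 0" "l1norm (b - a) \<le> e * lam" and Y: "Y \<in> sets borel"
  shows "emeasure (distr (laplace_vec lam) borel (\<lambda>r. a + r)) Y
     \<le> ennreal (exp e) * emeasure (distr (laplace_vec lam) borel (\<lambda>r. b + r)) Y"
proof -
  define f where "f = (\<lambda>r::real ^ 'd. ennreal (\<Prod>k\<in>UNIV. laplace_density lam (r $ k)))"
  have f: "f \<in> borel_measurable borel"
    unfolding f_def by (rule borel_measurable_laplace_vec_density)
  have f_shift: "f (s + (b - a)) \<le> ennreal (exp e) * f s" for s
  proof -
    have "(\<Prod>k\<in>UNIV. laplace_density lam ((s + (b - a)) $ k))
       \<le> exp (l1norm (b - a) / lam) * (\<Prod>k\<in>UNIV. laplace_density lam (s $ k))"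
      by (rule laplace_vec_density_shift_le[OF assms(1)])
    also have "\<dots> \<le> exp e * (\<Prod>k\<in>UNIV. laplace_density lam (s $ k))"
      using assms by (intro mult_right_mono)
        (auto simp: laplace_density_def prod_nonneg pos_divide_le_eq)
    finally show ?thesis
      unfolding f_def by (simp add: ennreal_mult'[symmetric] ennreal_leI)
  qed
  have "(\<integral>\<^sup>+ r. f r * indicator Y (a + r) \<partial>lborel)
      = (\<integral>\<^sup>+ r. f r * indicator Y (a + r) \<partial>distr lborel borel ((+) (b - a)))"
    by (simp add: lborel_distr_plus)
  also have "\<dots> = (\<integral>\<^sup>+ s. f (s + (b - a)) * indicator Y (b + s) \<partial>lborel)"
    using f Y by (subst nn_integral_distr) (auto simp: algebra_simps)
  also have "\<dots> \<le> (\<integral>\<^sup>+ s. ennreal (exp e) * (f s * indicator Y (b + s)) \<partial>lborel)"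
    using f_shift by (intro nn_integral_mono) (auto simp: indicator_def)
  also have "\<dots> = ennreal (exp e) * (\<integral>\<^sup>+ s. f s * indicator Y (b + s) \<partial>lborel)"
    by (rule nn_integral_cmult) (use f Y in measurable)
  finally show ?thesis
    using Y by (simp add: emeasure_shifted_laplace_vec f_def)
qed

text \<open>Passing from \<open>emeasure\<close> to \<open>measure\<close> needs no finiteness of the Laplace measure:
  the bound in both directions makes the two emeasures either both finite or both infinite.\<close>

lemma enn2real_le_of_two_sided_bound:
  fixes x y :: ennreal
  assumes "x \<le> ennreal c * y" "y \<le> ennreal c * x" "c \<ge> 0"
  shows "enn2real x \<le> c * enn2real y"
proof (cases "y = top")
  case True
  then have "x = top"
    using assms(2) by (auto simp: ennreal_mult_eq_top_iff top_unique)
  with True show ?thesis by simp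
next
  case False
  have "enn2real x \<le> enn2real (ennreal c * y)"
    using assms(1) False
    by (intro enn2real_mono) (auto simp: ennreal_mult_less_top less_top[symmetric] ennreal_mult_eq_top_iff)
  also have "\<dots> = c * enn2real y"
    using assms(3) by (simp add: enn2real_mult)
  finally show ?thesis .
qed

lemma diff_private_laplace_mechanism:
  fixes f :: "'a \<Rightarrow> real ^ 'd"
  assumes "lam > 0"
    and sensitivity: "\<And>D D'. nb D D' \<Longrightarrow> l1norm (f D - f D') \<le> \<epsilon> * lam"
  shows "diff_private (\<lambda>D. distr (laplace_vec lam) borel (\<lambda>r. f D + r)) nb \<epsilon>"
  unfolding diff_private_def
proof (intro allI impI ballI)
  fix D D' and Y :: "(real ^ 'd) set"
  assume "nb D D'" and Y: "Y \<in> sets borel"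
  then have "l1norm (f D - f D') \<le> \<epsilon> * lam" "l1norm (f D' - f D) \<le> \<epsilon> * lam"
    using sensitivity l1norm_minus_commute by metis+
  then show "measure (distr (laplace_vec lam) borel (\<lambda>r. f D + r)) Y
      \<le> exp \<epsilon> * measure (distr (laplace_vec lam) borel (\<lambda>r. f D' + r)) Y"
    unfolding measure_def using Y \<open>lam > 0\<close>
    by (intro enn2real_le_of_two_sided_bound emeasure_shifted_laplace_vec_le) auto
qed

lemma diff_private_mono:
  assumes "diff_private M nb \<epsilon>" "\<And>D D'. nb' D D' \<Longrightarrow> nb D D'"
  shows "diff_private M nb' \<epsilon>"
  using assms unfolding diff_private_def by blast

lemma record_neighboring_imp_voter_neighboring:
  "record_neighboring D D' \<Longrightarrow> voter_neighboring D D'"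
  unfolding record_neighboring_def voter_neighboring_def by blast

lemma l1norm_sum_diff_single_le:
  fixes g h :: "'i \<Rightarrow> real ^ 'd"
  assumes "finite A" "i \<in> A" "\<And>j. j \<in> A \<Longrightarrow> j \<noteq> i \<Longrightarrow> g j = h j"
    and "l1norm (g i) \<le> B" "l1norm (h i) \<le> B"
  shows "l1norm (sum g A - sum h A) \<le> 2 * B"
proof -
  have "sum g (A - {i}) = sum h (A - {i})"
    using assms(3) by (intro sum.cong) auto
  then have "sum g A - sum h A = g i - h i"
    using assms(1,2) by (simp add: sum.remove)
  then show ?thesis
    using l1norm_diff_le[of "g i" "h i"] assms(4,5) by simp
qed

lemma voter_sensitivity_of_average:
  fixes sel :: "('r \<Rightarrow> 'x) \<Rightarrow> real ^ 'd" and D D' :: "'v::finite \<Rightarrow> 'r \<Rightarrow> 'x"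
  assumes bound: "\<And>Di. l1norm (sel Di) \<le> B" and "voter_neighboring D D'"
  shows "l1norm ((1 / real CARD('v)) *\<^sub>R (\<Sum>i\<in>UNIV. sel (D i))
               - (1 / real CARD('v)) *\<^sub>R (\<Sum>i\<in>UNIV. sel (D' i)))
         \<le> 2 * B / real CARD('v)"
proof -
  obtain i where i: "\<And>i'. i' \<noteq> i \<Longrightarrow> D i' = D' i'"
    using assms(2) unfolding voter_neighboring_def by blast
  have "l1norm ((\<Sum>i\<in>UNIV. sel (D i)) - (\<Sum>i\<in>UNIV. sel (D' i))) \<le> 2 * B"
    by (rule l1norm_sum_diff_single_le[of UNIV i]) (use i bound in auto)
  then show ?thesis
    by (simp add: scaleR_diff_right[symmetric] l1norm_scaleR divide_right_mono)
qed

theorem theorem1: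
  fixes sel :: "('r::finite \<Rightarrow> (real ^ 'd) \<times> (real ^ 'd)) \<Rightarrow> real ^ 'd"
    and B \<epsilon> :: real
  assumes "B > 0" and "\<epsilon> > 0"
    and "\<And>Di. is_argmax B Di (sel Di)"
  shows "diff_private (algo1 sel B \<epsilon> :: ('v::finite \<Rightarrow> 'r \<Rightarrow> (real ^ 'd) \<times> (real ^ 'd)) \<Rightarrow> _)
           voter_neighboring \<epsilon>
       \<and> diff_private (algo1 sel B \<epsilon> :: ('v::finite \<Rightarrow> 'r \<Rightarrow> (real ^ 'd) \<times> (real ^ 'd)) \<Rightarrow> _)
           record_neighboring \<epsilon>"
proof -
  define lam where "lam = 2 * B / (real CARD('v) * \<epsilon>)"
  have "lam > 0"
    using assms(1,2) by (simp add: lam_def)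
  have "\<epsilon> * lam = 2 * B / real CARD('v)"
    using assms(2) by (simp add: lam_def)
  moreover have "\<And>Di. l1norm (sel Di) \<le> B"
    using assms(3) by (simp add: is_argmax_def)
  ultimately have voter: "diff_private (algo1 sel B \<epsilon> :: ('v \<Rightarrow> 'r \<Rightarrow> _) \<Rightarrow> _)
      voter_neighboring \<epsilon>"
    unfolding algo1_def lam_def[symmetric]
    by (intro diff_private_laplace_mechanism \<open>lam > 0\<close>)
      (auto intro: voter_sensitivity_of_average)
  then show ?thesis
    using diff_private_mono record_neighboring_imp_voter_neighboring by blast
qed

end
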